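(* Let $M\subset E^n$ be an $r$-helix hypersurface and let $H\subset\mathbb{R}^n$ be its subspace of helix directions. Let $\alpha: I\subset\mathbb{R}\to M$ be a unit speed (arc-length parametrized) geodesic curve on $M$. Then the tangent indicatrix $\alpha'(s)$ of $\alpha$, regarded as a curve on the unit hypersphere $S^{n-1}\subset E^n$, is a spherical helix (general helix) with respect to any helix direction $d\in H$.
   Context: $E^n$ denotes $\mathbb{R}^n$ with the standard inner product $\langle X,Y\rangle=\sum x_iy_i$. A hypersurface $M\subset\mathbb{R}^n$ with unit normal field $\xi$ is a helix with respect to a fixed unit direction $d$ if the angle between $d$ and $T_qM$ is the same for all $q\in M$, equivalently $\langle d,\xi\rangle$ is constant on $M$. $M$ is an $r$-helix if there is a linear subspace $H\subset\mathbb{R}^n$ with $\dim H=r$ such that $M$ is a helix with respect to every direction $d\in H$; $H$ is the subspace of helix directions. A curve $\alpha$ on $M$ is a geodesic if $\alpha''$ is normal to $M$ at every point. Curves are assumed regular with nonvanishing curvatures, so that they have a Frenet frame $\{V_1,\dots,V_n\}$ with $V_1'=k_1V_2$, $V_i'=-k_{i-1}V_{i-1}+k_iV_{i+1}$. A curve is a general helix with respect to a fixed direction $d$ if its unit tangent vector makes a constant angle with $d$; a spherical helix is a general helix lying on $S^{n-1}$. *)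

theory Defs
  imports "HOL-Analysis.Analysis"
begin

definition tangent_space :: "(real^'n) set \<Rightarrow> real^'n \<Rightarrow> (real^'n) set" where
  "tangent_space M q = {v. \<exists>e>0. \<exists>\<gamma>. \<gamma> ` ball 0 e \<subseteq> M \<and> \<gamma> 0 = q \<and>
       (\<gamma> has_vector_derivative v) (at 0)}"

definition hypersurface_with_normal :: "(real^'n) set \<Rightarrow> (real^'n \<Rightarrow> real^'n) \<Rightarrow> bool" where
  "hypersurface_with_normal M \<xi> \<longleftrightarrow>
     continuous_on M \<xi> \<and>
     (\<forall>q\<in>M. norm (\<xi> q) = 1 \<and> tangent_space M q = {v. v \<bullet> \<xi> q = 0})"

definition helix_hypersurface :: "(real^'n) set \<Rightarrow> (real^'n \<Rightarrow> real^'n) \<Rightarrow> real^'n \<Rightarrow> bool" where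
  "helix_hypersurface M \<xi> d \<longleftrightarrow> (\<exists>c. \<forall>q\<in>M. d \<bullet> \<xi> q = c)"

definition helix_directions_subspace ::
  "(real^'n) set \<Rightarrow> (real^'n \<Rightarrow> real^'n) \<Rightarrow> nat \<Rightarrow> (real^'n) set \<Rightarrow> bool" where
  "helix_directions_subspace M \<xi> r H \<longleftrightarrow>
     subspace H \<and> dim H = r \<and> (\<forall>d\<in>H. helix_hypersurface M \<xi> d)"

definition geodesic_on ::
  "(real^'n) set \<Rightarrow> (real \<Rightarrow> real^'n) \<Rightarrow> (real \<Rightarrow> real^'n) \<Rightarrow> real set \<Rightarrow> bool" where
  "geodesic_on M \<alpha> \<alpha>2 I \<longleftrightarrow>
     (\<forall>s\<in>I. \<alpha> s \<in> M \<and> (\<forall>v\<in>tangent_space M (\<alpha> s). \<alpha>2 s \<bullet> v = 0))"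

definition general_helix :: "(real \<Rightarrow> real^'n) \<Rightarrow> real set \<Rightarrow> real^'n \<Rightarrow> bool" where
  "general_helix \<beta> I d \<longleftrightarrow>
     (\<forall>s\<in>I. \<beta> differentiable (at s) \<and> vector_derivative \<beta> (at s) \<noteq> 0) \<and>
     (\<exists>c. \<forall>s\<in>I. (vector_derivative \<beta> (at s) /\<^sub>R norm (vector_derivative \<beta> (at s))) \<bullet> d = c)"

definition spherical_helix :: "(real \<Rightarrow> real^'n) \<Rightarrow> real set \<Rightarrow> real^'n \<Rightarrow> bool" where
  "spherical_helix \<beta> I d \<longleftrightarrow> (\<forall>s\<in>I. norm (\<beta> s) = 1) \<and> general_helix \<beta> I d"

end

theory Submission
  imports Defs
begin

text \<open>Along a geodesic the acceleration \<open>\<alpha>''\<close> is a nonvanishing multiple \<open>f s\<close> of the unit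
  normal \<open>\<xi>(\<alpha> s)\<close>, and \<open>f\<close> is continuous, so it never changes sign on the interval. Hence the
  unit tangent of the indicatrix \<open>\<alpha>'\<close> is \<open>\<plusminus>\<xi>(\<alpha> s)\<close> with a fixed sign, and its inner product with
  a helix direction \<open>d\<close> is \<open>\<plusminus>\<langle>d, \<xi>\<rangle>\<close>, which is constant on \<open>M\<close>.\<close>

lemma orthogonal_to_complement_imp_parallel:
  fixes w x :: "'a::real_inner"
  assumes "norm x = 1" and "\<forall>v. v \<bullet> x = 0 \<longrightarrow> w \<bullet> v = 0"
  shows "w = (w \<bullet> x) *\<^sub>R x"
proof -
  define v where "v = w - (w \<bullet> x) *\<^sub>R x"
  have "x \<bullet> x = 1" using assms(1) by (simp add: norm_eq_1)
  then have "v \<bullet> x = 0" unfolding v_def by (simp add: inner_diff_left)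
  then have "w \<bullet> v = 0" using assms(2) by blast
  with \<open>v \<bullet> x = 0\<close> have "v \<bullet> v = 0" unfolding v_def
    by (simp add: inner_diff_left inner_commute)
  then show ?thesis unfolding v_def by simp
qed

lemma connected_nonzero_sgn_eq:
  fixes f :: "'a::topological_space \<Rightarrow> real"
  assumes "connected S" "continuous_on S f" "\<forall>x\<in>S. f x \<noteq> 0" "x \<in> S" "y \<in> S"
  shows "sgn (f x) = sgn (f y)"
proof (rule ccontr)
  assume "sgn (f x) \<noteq> sgn (f y)"
  with assms(3-5) have "min (f x) (f y) \<le> 0 \<and> 0 \<le> max (f x) (f y)"
    by (auto simp: sgn_if split: if_splits)
  moreover have "connected (f ` S)" by (rule connected_continuous_image[OF assms(2,1)])
  ultimately have "0 \<in> f ` S"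
    using assms(4,5) connectedD_interval[of "f ` S" "f x" "f y" 0]
      connectedD_interval[of "f ` S" "f y" "f x" 0]
    by (cases "f x \<le> f y") (auto simp: min_def max_def)
  with assms(3) show False by auto
qed

lemma geodesic_acceleration_normal:
  assumes "hypersurface_with_normal M \<xi>" "geodesic_on M \<alpha> \<alpha>2 I" "s \<in> I"
  shows "\<alpha>2 s = (\<alpha>2 s \<bullet> \<xi> (\<alpha> s)) *\<^sub>R \<xi> (\<alpha> s)"
proof (rule orthogonal_to_complement_imp_parallel)
  have "\<alpha> s \<in> M" using assms(2,3) unfolding geodesic_on_def by blast
  with assms(1) show "norm (\<xi> (\<alpha> s)) = 1"
    unfolding hypersurface_with_normal_def by blast
  from \<open>\<alpha> s \<in> M\<close> assms show "\<forall>v. v \<bullet> \<xi> (\<alpha> s) = 0 \<longrightarrow> \<alpha>2 s \<bullet> v = 0"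
    unfolding hypersurface_with_normal_def geodesic_on_def by blast
qed

lemma continuous_on_normal_along_curve:
  assumes "hypersurface_with_normal M \<xi>" "continuous_on I \<alpha>" "\<alpha> ` I \<subseteq> M"
  shows "continuous_on I (\<lambda>s. \<xi> (\<alpha> s))"
  using continuous_on_compose[OF assms(2)] continuous_on_subset[of M \<xi>] assms
  unfolding hypersurface_with_normal_def o_def by blast

lemma general_helixI:
  assumes "\<forall>s\<in>I. (\<beta> has_vector_derivative \<beta>' s) (at s) \<and> \<beta>' s \<noteq> 0"
    and "\<forall>s\<in>I. (\<beta>' s /\<^sub>R norm (\<beta>' s)) \<bullet> d = c"
  shows "general_helix \<beta> I d"
proof -
  have "\<forall>s\<in>I. vector_derivative \<beta> (at s) = \<beta>' s"
    using assms(1) vector_derivative_at by blast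
  with assms show ?thesis
    unfolding general_helix_def by (metis differentiableI_vector)
qed

theorem theorem3p1:
  fixes M :: "(real^'n) set" and \<xi> :: "real^'n \<Rightarrow> real^'n"
    and H :: "(real^'n) set" and r :: nat
    and \<alpha> \<alpha>1 \<alpha>2 :: "real \<Rightarrow> real^'n" and I :: "real set"
  assumes hyp: "hypersurface_with_normal M \<xi>"
    and helixH: "helix_directions_subspace M \<xi> r H"
    and I: "is_interval I" "open I" "I \<noteq> {}"
    and d1: "\<forall>s\<in>I. (\<alpha> has_vector_derivative \<alpha>1 s) (at s)"
    and d2: "\<forall>s\<in>I. (\<alpha>1 has_vector_derivative \<alpha>2 s) (at s)"
    and unit_speed: "\<forall>s\<in>I. norm (\<alpha>1 s) = 1"
    and cont2: "continuous_on I \<alpha>2"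
    and curv: "\<forall>s\<in>I. \<alpha>2 s \<noteq> 0"
    and geo: "geodesic_on M \<alpha> \<alpha>2 I"
  shows "\<forall>d\<in>H. norm d = 1 \<longrightarrow> spherical_helix \<alpha>1 I d"
proof (intro ballI impI)
  fix d assume "d \<in> H"
  then obtain c where c: "\<forall>q\<in>M. d \<bullet> \<xi> q = c"
    using helixH unfolding helix_directions_subspace_def helix_hypersurface_def by blast
  obtain s0 where "s0 \<in> I" using I(3) by blast
  define f where "f s = \<alpha>2 s \<bullet> \<xi> (\<alpha> s)" for s
  have inM: "\<alpha> ` I \<subseteq> M" using geo unfolding geodesic_on_def by blast
  have par: "\<alpha>2 s = f s *\<^sub>R \<xi> (\<alpha> s)" if "s \<in> I" for s
    using geodesic_acceleration_normal[OF hyp geo that] unfolding f_def .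
  have unit_normal: "norm (\<xi> (\<alpha> s)) = 1" if "s \<in> I" for s
    using hyp inM that unfolding hypersurface_with_normal_def by blast
  have "continuous_on I \<alpha>"
    using d1 by (meson continuous_at_imp_continuous_on has_vector_derivative_continuous)
  then have "continuous_on I f" unfolding f_def
    by (intro continuous_on_inner cont2 continuous_on_normal_along_curve[OF hyp _ inM])
  moreover have "\<forall>s\<in>I. f s \<noteq> 0" using par curv by fastforce
  ultimately have sgn_f: "sgn (f s) = sgn (f s0)" if "s \<in> I" for s
    using connected_nonzero_sgn_eq I(1) \<open>s0 \<in> I\<close> that is_interval_connected by blast
  have "(\<alpha>2 s /\<^sub>R norm (\<alpha>2 s)) \<bullet> d = sgn (f s0) * c" if "s \<in> I" for s
    using par[OF that] unit_normal[OF that] sgn_f[OF that] c inM that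
    by (auto simp: sgn_div_norm inner_commute)
  with d2 curv have "general_helix \<alpha>1 I d" by (blast intro: general_helixI)
  with unit_speed show "spherical_helix \<alpha>1 I d" unfolding spherical_helix_def by blast
qed

end
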